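(* Fix $c>0$. There is a constant $\varepsilon>0$ such that if $n=2^k$ and $G$ is a random graph drawn from $\mathcal G(n,\tfrac12)$, then with probability tending to $1$ as $n\to\infty$, $L(\Psi_G)\ge n^{\varepsilon\log n}$; i.e. with high probability $L(\Psi_G)=n^{\Omega(\log n)}$.
   Context: Logarithms are base 2. $\mathcal G(n,\tfrac12)$ is the Erdős–Rényi random graph where each pair of vertices is an edge independently with probability $1/2$. Resolution: a refutation of a CNF is a sequence of clauses, each a clause of the formula or derived from earlier $A\lor x$, $B\lor\neg x$ as $A\lor B$, ending with the empty clause; $L(\phi)$ is the minimum number of clauses of a resolution refutation of $\phi$ ($\infty$ if $\phi$ is satisfiable). For a graph $G$ on $n=2^k$ vertices, identify vertices with strings $v_1\cdots v_k\in\{0,1\}^k$ (assume $ck$ is an integer). $\Psi_G$ has variables $x^i_b$ ($i\in[ck]$, $b\in[k]$) and $y$; $(x^i_b\ne v_b)$ denotes $\neg x^i_b$ if $v_b=1$ and $x^i_b$ if $v_b=0$. Clauses: (1) for each vertex $v$ and distinct $i,j$: $\bigvee_b(x^i_b\ne v_b)\lor\bigvee_b(x^j_b\ne v_b)$; (2) for distinct $u,v$ with $\{u,v\}\in E(G)$ and distinct $i,j$: $y\lor\bigvee_b(x^i_b\ne u_b)\lor\bigvee_b(x^j_b\ne v_b)$; (3) for distinct $u,v$ with $\{u,v\}\notin E(G)$ and distinct $i,j$: $\neg y\lor\bigvee_b(x^i_b\ne u_b)\lor\bigvee_b(x^j_b\ne v_b)$. *)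

theory Defs
  imports Complex_Main "HOL-Library.Extended_Nat"
begin

text \<open>A literal is a pair (variable, polarity); polarity True means the positive
literal x, False means the negated literal not x.\<close>

type_synonym 'v lit = "'v \<times> bool"
type_synonym 'v clause = "'v lit set"

definition resolvent :: "'v clause \<Rightarrow> 'v clause \<Rightarrow> 'v clause \<Rightarrow> bool" where
  "resolvent C1 C2 R \<longleftrightarrow>
     (\<exists>x. (x, True) \<in> C1 \<and> (x, False) \<in> C2 \<and>
          R = (C1 - {(x, True)}) \<union> (C2 - {(x, False)}))"

definition is_refutation :: "'v clause set \<Rightarrow> 'v clause list \<Rightarrow> bool" where
  "is_refutation F P \<longleftrightarrow>
     P \<noteq> [] \<and> last P = {} \<and>
     (\<forall>t < length P. P ! t \<in> F \<or>
        (\<exists>a < t. \<exists>b < t. resolvent (P ! a) (P ! b) (P ! t)))"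

definition res_length :: "'v clause set \<Rightarrow> enat" where
  "res_length F =
     (if \<exists>P. is_refutation F P
      then enat (LEAST m. \<exists>P. is_refutation F P \<and> length P = m)
      else \<infinity>)"

text \<open>Variables: X i b stands for x^i_b (i \<in> [ck], b \<in> [k]), and Y for y.
Vertices of the graph on n = 2^k vertices are the naturals v < 2^k, identified
with their binary strings: v_b is bit b of v.\<close>

datatype var = X nat nat | Y

definition neq_block :: "nat \<Rightarrow> nat \<Rightarrow> nat \<Rightarrow> var clause" where
  "neq_block k i v = {(X i b, \<not> bit v b) | b. b < k}"

definition vertex_pairs :: "nat \<Rightarrow> nat set set" where
  "vertex_pairs k = {{u, v} | u v. u < 2^k \<and> v < 2^k \<and> u \<noteq> v}"

text \<open>\<Psi>_G with m = ck pigeon indices.\<close>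
definition Psi :: "nat \<Rightarrow> nat \<Rightarrow> nat set set \<Rightarrow> var clause set" where
  "Psi k m E =
     {neq_block k i v \<union> neq_block k j v | v i j.
        v < 2^k \<and> i < m \<and> j < m \<and> i \<noteq> j}
   \<union> {{(Y, True)} \<union> neq_block k i u \<union> neq_block k j v | u v i j.
        u < 2^k \<and> v < 2^k \<and> u \<noteq> v \<and> {u, v} \<in> E \<and> i < m \<and> j < m \<and> i \<noteq> j}
   \<union> {{(Y, False)} \<union> neq_block k i u \<union> neq_block k j v | u v i j.
        u < 2^k \<and> v < 2^k \<and> u \<noteq> v \<and> {u, v} \<notin> E \<and> i < m \<and> j < m \<and> i \<noteq> j}"

text \<open>With p = 1/2 every edge set on the vertex set is equally likely, so the
probability of a property is the fraction of edge sets satisfying it.\<close>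
definition gnp_half_prob :: "nat \<Rightarrow> (nat set set \<Rightarrow> bool) \<Rightarrow> real" where
  "gnp_half_prob k Q =
     real (card {E. E \<subseteq> vertex_pairs k \<and> Q E}) / real (card (Pow (vertex_pairs k)))"

end

theory Submission
  imports Defs "HOL-Library.FuncSet" "HOL-Real_Asymp.Real_Asymp"
begin

text \<open>Call \<open>G\<close> extendable if every set of fewer than \<open>k/16\<close> vertices has a common neighbour
outside it in every subcube of \<open>{0,1}^k\<close> of codimension at most \<open>3k/4\<close>; a union bound shows
that \<open>G(n, 1/2)\<close> is extendable with high probability. Fix such a \<open>G\<close> and a refutation \<open>P\<close> of
\<open>\<Psi>\<^sub>G\<close>. A random restriction sets \<open>y\<close> to true and, in each pair of bits of each pigeon,
fixes one bit at random; a clause meeting \<open>r\<close> pairs stays unsatisfied with probability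
at most \<open>(3/4)^r\<close>, so if \<open>P\<close> is shorter than \<open>(4/3)^(\<Omega>(k^2))\<close> some restriction leaves every
surviving clause with fewer than \<open>k^2/64\<close> free variables. Such a narrow restricted refutation
is impossible: a Delayer that embeds every pigeon with at least \<open>k/4\<close> assigned bits into a
clique of \<open>G\<close>, using extendability to place a pigeon when it becomes heavy, never falsifies a
clause. Hence \<open>L(\<Psi>\<^sub>G) \<ge> 2^(\<Omega>(k^2)) = n^(\<Omega>(log n))\<close>.\<close>

section \<open>Partial assignments and resolution\<close>

definition vars :: "'v clause \<Rightarrow> 'v set" where
  "vars C = fst ` C"

definition satisfies :: "('v \<rightharpoonup> bool) \<Rightarrow> 'v clause \<Rightarrow> bool" where
  "satisfies a C \<longleftrightarrow> (\<exists>(x, p)\<in>C. a x = Some p)"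

definition falsifies :: "('v \<rightharpoonup> bool) \<Rightarrow> 'v clause \<Rightarrow> bool" where
  "falsifies a C \<longleftrightarrow> (\<forall>(x, p)\<in>C. a x = Some (\<not> p))"

lemma falsifies_Un [simp]: "falsifies a (A \<union> B) \<longleftrightarrow> falsifies a A \<and> falsifies a B"
  unfolding falsifies_def by auto

lemma falsifies_insert [simp]:
  "falsifies a (insert l C) \<longleftrightarrow> a (fst l) = Some (\<not> snd l) \<and> falsifies a C"
  unfolding falsifies_def by (cases l) auto

lemma falsifies_resolvent:
  assumes "R = (C1 - {(x, True)}) \<union> (C2 - {(x, False)})" and "falsifies a R"
  shows "a x = Some False \<Longrightarrow> falsifies a C1" and "a x = Some True \<Longrightarrow> falsifies a C2"
  using assms unfolding falsifies_def by fastforce+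

lemma refutation_step:
  assumes "is_refutation F P" and "t < length P"
  obtains "P ! t \<in> F"
  | a b x where "a < t" "b < t" "(x, True) \<in> P ! a" "(x, False) \<in> P ! b"
      "P ! t = (P ! a - {(x, True)}) \<union> (P ! b - {(x, False)})"
  using assms unfolding is_refutation_def resolvent_def by blast

lemma refutation_vars_subset:
  assumes "is_refutation F P" and "\<And>C. C \<in> F \<Longrightarrow> vars C \<subseteq> V" and "t < length P"
  shows "vars (P ! t) \<subseteq> V"
  using assms(3)
proof (induction t rule: less_induct)
  case (less t)
  from assms(1) less.prems show ?case
  proof (cases rule: refutation_step)
    case (2 a b x)
    with less.IH[of a] less.IH[of b] less.prems show ?thesis
      unfolding vars_def by auto
  qed (use assms(2) in blast)
qed

lemma res_length_lower_bound:
  assumes "\<And>P. is_refutation F P \<Longrightarrow> N \<le> real (length P)"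
  shows "res_length F = \<infinity> \<or> (\<exists>L. res_length F = enat L \<and> N \<le> real L)"
proof (cases "\<exists>P. is_refutation F P")
  case True
  then obtain P where "is_refutation F P"
    and "length P = (LEAST m. \<exists>P. is_refutation F P \<and> length P = m)"
    using LeastI_ex[of "\<lambda>m. \<exists>P. is_refutation F P \<and> length P = m"] by blast
  with True assms[of P] show ?thesis unfolding res_length_def by simp
qed (simp add: res_length_def)

lemma falsifies_cong: "(\<And>y. y \<in> vars C \<Longrightarrow> a y = b y) \<Longrightarrow> falsifies a C \<longleftrightarrow> falsifies b C"
  unfolding falsifies_def vars_def by force

text \<open>If no member of \<open>H\<close> falsifies an axiom under \<open>\<rho>\<close>, then induction
along a refutation whose clauses unsatisfied by \<open>\<rho>\<close> have fewer than \<open>w\<close> free variables shows that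
no member falsifies any of its clauses; at a resolution step on an unassigned variable one first
forgets everything outside the resolvent and then extends.\<close>

locale extension_strategy =
  fixes V :: "'v set" and \<rho> :: "'v \<rightharpoonup> bool" and H :: "('v \<rightharpoonup> bool) set" and w :: nat
  assumes finite_V: "finite V"
    and empty_in: "Map.empty \<in> H"
    and restrict_in: "\<And>h A. h \<in> H \<Longrightarrow> h |` A \<in> H"
    and disjoint: "\<And>h. h \<in> H \<Longrightarrow> dom h \<inter> dom \<rho> = {}"
    and extend: "\<And>h x. h \<in> H \<Longrightarrow> finite (dom h) \<Longrightarrow> card (dom h) < w \<Longrightarrow>
                   x \<in> V - dom \<rho> - dom h \<Longrightarrow> \<exists>p. h(x \<mapsto> p) \<in> H"
begin

lemma not_falsifies_resolvent:
  assumes R: "R = (C1 - {(x, True)}) \<union> (C2 - {(x, False)})" and x: "x \<in> V" and R_vars: "vars R \<subseteq> V"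
    and parents: "\<And>g. g \<in> H \<Longrightarrow> \<not> falsifies (\<rho> ++ g) C1 \<and> \<not> falsifies (\<rho> ++ g) C2"
    and narrow: "\<not> satisfies \<rho> R \<Longrightarrow> card (vars R - dom \<rho>) < w"
    and h: "h \<in> H"
  shows "\<not> falsifies (\<rho> ++ h) R"
proof
  assume F: "falsifies (\<rho> ++ h) R"
  show False
  proof (cases "(\<rho> ++ h) x")
    case (Some q)
    then show False using falsifies_resolvent[OF R F] parents[OF h] by (cases q) auto
  next
    case None
    let ?U = "vars R - dom \<rho>"
    have "\<not> satisfies \<rho> R"
      using F disjoint[OF h] unfolding satisfies_def falsifies_def map_add_def
      by (fastforce split: option.splits)
    then have "card ?U < w" by (rule narrow)
    moreover have "finite ?U" using R_vars finite_V finite_subset by blast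
    ultimately have small: "finite (dom (h |` ?U))" "card (dom (h |` ?U)) < w"
      by (auto intro: finite_subset le_less_trans[OF card_mono])
    have "x \<in> V - dom \<rho> - dom (h |` ?U)" using x None by auto
    then obtain p where h': "(h |` ?U)(x \<mapsto> p) \<in> H"
      using extend[OF restrict_in[OF h] small] by blast
    have "(\<rho> ++ (h |` ?U)(x \<mapsto> p)) y = (\<rho> ++ h) y" if "y \<in> vars R" for y
    proof -
      have "(\<rho> ++ h) y \<noteq> None" using F that unfolding falsifies_def vars_def by auto
      then have "y \<noteq> x" using None by auto
      then show ?thesis
        using that disjoint[OF h]
        by (auto simp: map_add_def restrict_map_def split: option.splits)
    qed
    then have "falsifies (\<rho> ++ (h |` ?U)(x \<mapsto> p)) R" using F falsifies_cong by blast
    then show False using falsifies_resolvent[OF R] parents[OF h'] by (cases p) auto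
  qed
qed

theorem no_refutation_by_extension_strategy:
  assumes F_vars: "\<And>C. C \<in> F \<Longrightarrow> vars C \<subseteq> V"
    and sound: "\<And>h C. h \<in> H \<Longrightarrow> C \<in> F \<Longrightarrow> \<not> falsifies (\<rho> ++ h) C"
    and narrow: "\<And>C. C \<in> set P \<Longrightarrow> \<not> satisfies \<rho> C \<Longrightarrow> card (vars C - dom \<rho>) < w"
  shows "\<not> is_refutation F P"
proof
  assume R: "is_refutation F P"
  have "\<not> falsifies (\<rho> ++ h) (P ! t)" if "t < length P" "h \<in> H" for t h
    using that
  proof (induction t arbitrary: h rule: less_induct)
    case (less t)
    from R \<open>t < length P\<close> show ?case
    proof (cases rule: refutation_step)
      case 1
      with sound less.prems show ?thesis by blast
    next
      case (2 a b x)
      have "x \<in> vars (P ! a)" using 2(3) unfolding vars_def by force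
      then have "x \<in> V" using refutation_vars_subset[OF R F_vars, of a] 2(1) less.prems(1) by auto
      moreover have "vars (P ! t) \<subseteq> V" using refutation_vars_subset[OF R F_vars less.prems(1)] .
      moreover have "\<not> satisfies \<rho> (P ! t) \<Longrightarrow> card (vars (P ! t) - dom \<rho>) < w"
        using narrow less.prems(1) by auto
      moreover have "\<not> falsifies (\<rho> ++ g) (P ! a) \<and> \<not> falsifies (\<rho> ++ g) (P ! b)" if "g \<in> H" for g
        using less.IH 2 less.prems that by auto
      ultimately show ?thesis using not_falsifies_resolvent[OF 2(5)] less.prems(2) by blast
    qed
  qed
  moreover from R have "length P - 1 < length P" "P ! (length P - 1) = {}"
    unfolding is_refutation_def by (auto simp: last_conv_nth)
  ultimately show False using empty_in by (metis falsifies_def empty_iff)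
qed

end

section \<open>Binary encoding of vertices and the extension property\<close>

definition nat_of_bits :: "nat \<Rightarrow> (nat \<Rightarrow> bool) \<Rightarrow> nat" where
  "nat_of_bits k \<phi> = horner_sum of_bool 2 (map \<phi> [0..<k])"

lemma nat_of_bits_less: "nat_of_bits k \<phi> < 2 ^ k"
proof -
  have "take_bit k (nat_of_bits k \<phi>) = nat_of_bits k \<phi>"
    unfolding nat_of_bits_def by (simp add: take_bit_horner_sum_bit_eq)
  then show ?thesis by (simp add: take_bit_nat_eq_self_iff)
qed

lemma bit_nat_of_bits: "bit (nat_of_bits k \<phi>) b \<longleftrightarrow> b < k \<and> \<phi> b"
  unfolding nat_of_bits_def by (auto simp: bit_horner_sum_bit_iff)

lemma nat_eq_if_low_bits_eq:
  fixes u v :: nat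
  assumes "u < 2 ^ k" "v < 2 ^ k" "\<And>b. b < k \<Longrightarrow> bit u b = bit v b"
  shows "u = v"
proof -
  have "take_bit k u = take_bit k v"
    using assms(3) by (auto simp: bit_eq_iff bit_take_bit_iff)
  with assms(1,2) show ?thesis by (metis take_bit_nat_eq_self_iff)
qed

definition subcube :: "nat \<Rightarrow> nat set \<Rightarrow> nat \<Rightarrow> nat set" where
  "subcube k I a = {v. v < 2 ^ k \<and> (\<forall>b\<in>I. bit v b = bit a b)}"

definition extension_property :: "nat \<Rightarrow> nat \<Rightarrow> nat \<Rightarrow> nat set set \<Rightarrow> bool" where
  "extension_property k t D E \<longleftrightarrow>
     (\<forall>S I a. S \<subseteq> {..<2 ^ k} \<longrightarrow> card S < t \<longrightarrow> I \<subseteq> {..<k} \<longrightarrow> card I \<le> D \<longrightarrow> a < 2 ^ k \<longrightarrow>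
        (\<exists>v \<in> subcube k I a - S. \<forall>s\<in>S. {v, s} \<in> E))"

definition pigeon_vars :: "nat \<Rightarrow> nat \<Rightarrow> var set" where
  "pigeon_vars k m = {X i b | i b. i < m \<and> b < k}"

lemma finite_pigeon_vars: "finite (pigeon_vars k m)"
proof -
  have "pigeon_vars k m = (\<lambda>(i, b). X i b) ` ({..<m} \<times> {..<k})"
    unfolding pigeon_vars_def by auto
  then show ?thesis by simp
qed

lemma vars_Psi: "C \<in> Psi k m E \<Longrightarrow> vars C \<subseteq> insert Y (pigeon_vars k m)"
  unfolding Psi_def vars_def pigeon_vars_def neq_block_def by auto

lemma falsifies_neq_block:
  "falsifies a (neq_block k i v) \<longleftrightarrow> (\<forall>b<k. a (X i b) = Some (bit v b))"
  unfolding falsifies_def neq_block_def by auto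

section \<open>A Delayer strategy for \<open>\<Psi>\<^sub>G\<close>\<close>

text \<open>Under a restriction \<open>\<rho>\<close> setting \<open>y\<close> to true, the Delayer maintains an injective map
from the heavy pigeons onto a clique of \<open>G\<close>, consistent with their assigned bits, and answers
queries to a heavy pigeon according to its image. When a pigeon becomes heavy, at most \<open>D\<close> of
its bits are known, and the extension property yields a fresh vertex in the corresponding
subcube adjacent to all current images.\<close>

locale delayer_strategy =
  fixes k m t D \<theta> :: nat and E :: "nat set set" and \<rho> :: "var \<rightharpoonup> bool"
  assumes rho_Y: "\<rho> Y = Some True"
    and free_bits: "\<And>i. i < m \<Longrightarrow> k div 2 \<le> card {b. b < k \<and> \<rho> (X i b) = None}"
    and theta_pos: "0 < \<theta>" and theta_le: "\<theta> \<le> k div 2"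
    and D_ge: "k - k div 2 + (\<theta> - 1) \<le> D"
    and extension: "extension_property k t D E"
begin

definition assigned_bits :: "(var \<rightharpoonup> bool) \<Rightarrow> nat \<Rightarrow> nat" where
  "assigned_bits h i = card {b. b < k \<and> h (X i b) \<noteq> None}"

definition heavy :: "(var \<rightharpoonup> bool) \<Rightarrow> nat set" where
  "heavy h = {i. i < m \<and> \<theta> \<le> assigned_bits h i}"

definition embeds :: "(var \<rightharpoonup> bool) \<Rightarrow> nat set \<Rightarrow> (nat \<Rightarrow> nat) \<Rightarrow> bool" where
  "embeds h I f \<longleftrightarrow> inj_on f I \<and>
     (\<forall>i\<in>I. f i < 2 ^ k \<and> (\<forall>b<k. \<forall>p. (\<rho> ++ h) (X i b) = Some p \<longrightarrow> bit (f i) b = p)) \<and>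
     (\<forall>i\<in>I. \<forall>j\<in>I. i \<noteq> j \<longrightarrow> {f i, f j} \<in> E)"

definition admissible :: "(var \<rightharpoonup> bool) \<Rightarrow> bool" where
  "admissible h \<longleftrightarrow> dom h \<subseteq> pigeon_vars k m - dom \<rho> \<and> (\<exists>f. embeds h (heavy h) f)"

lemma admissible_empty: "admissible Map.empty"
  using theta_pos unfolding admissible_def embeds_def heavy_def assigned_bits_def by auto

lemma heavy_restrict: "heavy (h |` A) \<subseteq> heavy h"
proof -
  have "assigned_bits (h |` A) i \<le> assigned_bits h i" for i
    unfolding assigned_bits_def by (intro card_mono) (auto simp: restrict_map_def)
  then show ?thesis unfolding heavy_def by (auto intro: le_trans)
qed

lemma embedsI:
  assumes "inj_on f I" "\<And>i. i \<in> I \<Longrightarrow> f i < 2 ^ k"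
    "\<And>i b p. i \<in> I \<Longrightarrow> b < k \<Longrightarrow> (\<rho> ++ h) (X i b) = Some p \<Longrightarrow> bit (f i) b = p"
    "\<And>i j. i \<in> I \<Longrightarrow> j \<in> I \<Longrightarrow> i \<noteq> j \<Longrightarrow> {f i, f j} \<in> E"
  shows "embeds h I f"
  using assms unfolding embeds_def by simp

lemma embedsD:
  assumes "embeds h I f"
  shows "inj_on f I" and "i \<in> I \<Longrightarrow> f i < 2 ^ k"
    and "i \<in> I \<Longrightarrow> b < k \<Longrightarrow> (\<rho> ++ h) (X i b) = Some p \<Longrightarrow> bit (f i) b = p"
    and "i \<in> I \<Longrightarrow> j \<in> I \<Longrightarrow> i \<noteq> j \<Longrightarrow> {f i, f j} \<in> E"
  using assms unfolding embeds_def by simp_all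

lemma embeds_mono:
  assumes f: "embeds h I f" and J: "J \<subseteq> I"
    and agree: "\<And>x p. (\<rho> ++ h') x = Some p \<Longrightarrow> (\<rho> ++ h) x = Some p"
  shows "embeds h' J f"
proof (rule embedsI)
  show "inj_on f J" using embedsD(1)[OF f] J by (rule inj_on_subset)
  show "bit (f i) b = p" if "i \<in> J" "b < k" "(\<rho> ++ h') (X i b) = Some p" for i b p
    using embedsD(3)[OF f _ that(2) agree[OF that(3)]] that(1) J by blast
qed (use J embedsD[OF f] in blast)+

lemma admissible_restrict:
  assumes "admissible h"
  shows "admissible (h |` A)"
proof -
  obtain f where f: "embeds h (heavy h) f" using assms unfolding admissible_def by blast
  have dom: "dom h \<inter> dom \<rho> = {}" using assms unfolding admissible_def by auto
  have "(\<rho> ++ h |` A) x = Some p \<Longrightarrow> (\<rho> ++ h) x = Some p" for x p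
    using dom by (auto simp: map_add_def restrict_map_def split: option.splits if_splits)
  with f heavy_restrict have "embeds (h |` A) (heavy (h |` A)) f" by (rule embeds_mono)
  with assms show ?thesis unfolding admissible_def by auto
qed

lemma embeds_fully_assigned:
  assumes f: "embeds h (heavy h) f" and i: "i < m" and v: "v < 2 ^ k"
    and assigned: "\<And>b. b < k \<Longrightarrow> (\<rho> ++ h) (X i b) = Some (bit v b)"
  shows "i \<in> heavy h" "f i = v"
proof -
  have "h (X i b) \<noteq> None" if "b < k" "\<rho> (X i b) = None" for b
    using assigned[OF that(1)] that(2) by (auto simp: map_add_def split: option.splits)
  then have "{b. b < k \<and> \<rho> (X i b) = None} \<subseteq> {b. b < k \<and> h (X i b) \<noteq> None}"
    by auto
  then have "card {b. b < k \<and> \<rho> (X i b) = None} \<le> assigned_bits h i"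
    unfolding assigned_bits_def by (intro card_mono) auto
  then have "k div 2 \<le> assigned_bits h i" using free_bits[OF i] by linarith
  then show heavy: "i \<in> heavy h" using i theta_le unfolding heavy_def by simp
  show "f i = v"
    using embedsD(2)[OF f heavy] v embedsD(3)[OF f heavy _ assigned] by (rule nat_eq_if_low_bits_eq)
qed

lemma admissible_not_falsifies_Psi:
  assumes h: "admissible h" and C: "C \<in> Psi k m E"
  shows "\<not> falsifies (\<rho> ++ h) C"
proof
  assume F: "falsifies (\<rho> ++ h) C"
  obtain f where f: "embeds h (heavy h) f" using h unfolding admissible_def by blast
  have "h Y = None" using h unfolding admissible_def pigeon_vars_def by auto
  then have Y: "(\<rho> ++ h) Y = Some True" using rho_Y by (simp add: map_add_def)
  have placed: "i \<in> heavy h \<and> f i = v"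
    if "falsifies (\<rho> ++ h) (neq_block k i v)" "i < m" "v < 2 ^ k" for i v
    using embeds_fully_assigned[OF f that(2,3)] that(1) by (simp add: falsifies_neq_block)
  from C consider
      (same) v i j where "C = neq_block k i v \<union> neq_block k j v" "v < 2 ^ k" "i < m" "j < m" "i \<noteq> j"
    | (edge) u v i j where "C = {(Y, True)} \<union> neq_block k i u \<union> neq_block k j v"
    | (non_edge) u v i j where "C = {(Y, False)} \<union> neq_block k i u \<union> neq_block k j v"
        "u < 2 ^ k" "v < 2 ^ k" "u \<noteq> v" "{u, v} \<notin> E" "i < m" "j < m" "i \<noteq> j"
    unfolding Psi_def by blast
  then show False
  proof cases
    case same
    with F placed[of i v] placed[of j v] show False
      using embedsD(1)[OF f] unfolding inj_on_def by auto
  next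
    case non_edge
    with F placed[of i u] placed[of j v] show False using embedsD(4)[OF f] by auto
  qed (use F Y in auto)
qed

lemma card_heavy_le:
  assumes "finite (dom h)"
  shows "\<theta> * card (heavy h) \<le> card (dom h)"
proof -
  let ?A = "\<lambda>i. X i ` {b. b < k \<and> h (X i b) \<noteq> None}"
  have "(\<Sum>i\<in>heavy h. \<theta>) \<le> (\<Sum>i\<in>heavy h. card (?A i))"
    by (intro sum_mono) (auto simp: heavy_def assigned_bits_def card_image inj_on_def)
  also have "\<dots> = card (\<Union>i\<in>heavy h. ?A i)"
    by (rule card_UN_disjoint[symmetric]) (auto simp: heavy_def)
  also have "\<dots> \<le> card (dom h)"
    using assms by (intro card_mono) auto
  finally show ?thesis by (simp add: mult.commute)
qed

lemma assigned_bits_update: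
  assumes "h (X i b) = None" "b < k"
  shows "assigned_bits (h(X i b \<mapsto> p)) j =
           (if j = i then Suc (assigned_bits h i) else assigned_bits h j)"
proof -
  have "{c. c < k \<and> (h(X i b \<mapsto> p)) (X j c) \<noteq> None} =
        (if j = i then insert b {c. c < k \<and> h (X i c) \<noteq> None} else {c. c < k \<and> h (X j c) \<noteq> None})"
    using assms by auto
  then show ?thesis using assms unfolding assigned_bits_def by simp
qed

lemma heavy_update:
  assumes "h (X i b) = None" "b < k" "i < m"
  shows "heavy (h(X i b \<mapsto> p)) =
           (if \<theta> \<le> Suc (assigned_bits h i) then insert i (heavy h) else heavy h)"
  using assms by (auto simp: heavy_def assigned_bits_update)

lemma embeds_update:
  assumes f: "embeds h I f" and p: "i \<in> I \<Longrightarrow> p = bit (f i) b"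
  shows "embeds (h(X i b \<mapsto> p)) I f"
proof (rule embedsI)
  show "bit (f j) c = q" if "j \<in> I" "c < k" "(\<rho> ++ h(X i b \<mapsto> p)) (X j c) = Some q" for j c q
  proof (cases "j = i \<and> c = b")
    case True
    with that p show ?thesis by simp
  next
    case False
    with that embedsD(3)[OF f] show ?thesis by auto
  qed
qed (use embedsD[OF f] in auto)

lemma embeds_insert:
  assumes f: "embeds h I f" and i: "i \<notin> I" and v: "v < 2 ^ k" "v \<notin> f ` I"
    and adjacent: "\<And>s. s \<in> f ` I \<Longrightarrow> {v, s} \<in> E"
    and consistent: "\<And>c q. c < k \<Longrightarrow> (\<rho> ++ h) (X i c) = Some q \<Longrightarrow> bit v c = q"
  shows "embeds (h(X i b \<mapsto> bit v b)) (insert i I) (f(i := v))"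
proof (rule embedsI)
  show "inj_on (f(i := v)) (insert i I)"
    using embedsD(1)[OF f] i v(2) by (auto simp: inj_on_def)
  show "bit ((f(i := v)) j) c = q"
    if "j \<in> insert i I" "c < k" "(\<rho> ++ h(X i b \<mapsto> bit v b)) (X j c) = Some q" for j c q
  proof (cases "j = i")
    case True
    with that consistent show ?thesis by (cases "c = b") auto
  next
    case False
    with that embedsD(3)[OF f] show ?thesis by auto
  qed
  show "{(f(i := v)) j, (f(i := v)) j'} \<in> E"
    if "j \<in> insert i I" "j' \<in> insert i I" "j \<noteq> j'" for j j'
    using that i adjacent[of "f j"] adjacent[of "f j'"] embedsD(4)[OF f]
    by (auto simp: insert_commute)
qed (use v embedsD(2)[OF f] in auto)

lemma card_known_bits:
  assumes "i < m"
  shows "card {c. c < k \<and> (\<rho> ++ h) (X i c) \<noteq> None} \<le> k - k div 2 + assigned_bits h i"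
proof -
  let ?fixed = "{c. c < k \<and> \<rho> (X i c) \<noteq> None}"
  have "card ?fixed = card ({..<k} - {c. c < k \<and> \<rho> (X i c) = None})"
    by (rule arg_cong[where f = card]) auto
  also have "\<dots> = k - card {c. c < k \<and> \<rho> (X i c) = None}"
    by (subst card_Diff_subset) auto
  finally have "card ?fixed \<le> k - k div 2" using free_bits[OF assms] by linarith
  moreover have "card {c. c < k \<and> (\<rho> ++ h) (X i c) \<noteq> None}
                  \<le> card (?fixed \<union> {c. c < k \<and> h (X i c) \<noteq> None})"
    by (intro card_mono) (auto simp: map_add_def split: option.splits)
  ultimately show ?thesis
    using card_Un_le[of ?fixed "{c. c < k \<and> h (X i c) \<noteq> None}"]
    unfolding assigned_bits_def by linarith
qed

lemma finite_dom_admissible: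
  assumes "admissible h"
  shows "finite (dom h)"
proof -
  have "dom h \<subseteq> pigeon_vars k m" using assms unfolding admissible_def by blast
  then show ?thesis using finite_pigeon_vars by (rule finite_subset)
qed

lemma exists_fresh_image:
  assumes h: "admissible h" and f: "embeds h (heavy h) f" and small: "card (dom h) < \<theta> * t"
    and i: "i < m" "assigned_bits h i < \<theta>"
  obtains v where "v < 2 ^ k" "v \<notin> f ` heavy h" "\<And>s. s \<in> f ` heavy h \<Longrightarrow> {v, s} \<in> E"
    "\<And>c q. c < k \<Longrightarrow> (\<rho> ++ h) (X i c) = Some q \<Longrightarrow> bit v c = q"
proof -
  let ?S = "f ` heavy h" and ?I = "{c. c < k \<and> (\<rho> ++ h) (X i c) \<noteq> None}"
  let ?a = "nat_of_bits k (\<lambda>c. (\<rho> ++ h) (X i c) = Some True)"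
  have "\<theta> * card (heavy h) < \<theta> * t"
    using card_heavy_le[OF finite_dom_admissible[OF h]] small by linarith
  moreover have "card ?S \<le> card (heavy h)"
    by (rule card_image_le) (simp add: heavy_def)
  ultimately have S_card: "card ?S < t" by simp
  have S_sub: "?S \<subseteq> {..<2 ^ k}" using embedsD(2)[OF f] by auto
  have I_card: "card ?I \<le> D" using card_known_bits[OF i(1), of h] i(2) D_ge by linarith
  have I_sub: "?I \<subseteq> {..<k}" by auto
  obtain v where v: "v \<in> subcube k ?I ?a - ?S" and adj: "\<forall>s\<in>?S. {v, s} \<in> E"
    using extension[unfolded extension_property_def, rule_format,
        OF S_sub S_card I_sub I_card nat_of_bits_less] by (rule bexE)
  show ?thesis
  proof (rule that)
    show "v < 2 ^ k" "v \<notin> ?S" using v by (simp_all add: subcube_def)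
    show "bit v c = q" if "c < k" "(\<rho> ++ h) (X i c) = Some q" for c q
    proof -
      have "bit v c = bit ?a c" using v that unfolding subcube_def by auto
      also have "\<dots> = q" using that by (cases q) (simp_all add: bit_nat_of_bits)
      finally show ?thesis .
    qed
  qed (use adj in blast)
qed

lemma admissible_extend:
  assumes h: "admissible h" and small: "card (dom h) < \<theta> * t"
    and x: "x \<in> pigeon_vars k m - dom \<rho> - dom h"
  shows "\<exists>p. admissible (h(x \<mapsto> p))"
proof -
  obtain i b where xib: "x = X i b" and ib: "i < m" "b < k"
    using x unfolding pigeon_vars_def by auto
  have hx: "h (X i b) = None" using x xib by auto
  obtain f where f: "embeds h (heavy h) f" using h unfolding admissible_def by blast
  have dom: "dom (h(x \<mapsto> p)) \<subseteq> pigeon_vars k m - dom \<rho>" for p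
    using h x unfolding admissible_def by simp
  consider (heavy) "i \<in> heavy h" | (light) "i \<notin> heavy h" "\<not> \<theta> \<le> Suc (assigned_bits h i)"
    | (new) "i \<notin> heavy h" "\<theta> \<le> Suc (assigned_bits h i)" by blast
  then show ?thesis
  proof cases
    case heavy
    let ?p = "bit (f i) b"
    have "heavy (h(x \<mapsto> ?p)) = heavy h" using heavy heavy_update[of h i b, OF hx ib(2,1)] xib by auto
    with embeds_update[OF f] dom xib show ?thesis unfolding admissible_def by metis
  next
    case light
    have "heavy (h(x \<mapsto> True)) = heavy h"
      using light heavy_update[of h i b, OF hx ib(2,1)] xib by auto
    with embeds_update[OF f] light dom xib show ?thesis unfolding admissible_def by metis
  next
    case new
    then have "assigned_bits h i < \<theta>" using ib unfolding heavy_def by auto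
    with exists_fresh_image[OF h f small ib(1)] obtain v where v: "v < 2 ^ k" "v \<notin> f ` heavy h"
      "\<And>s. s \<in> f ` heavy h \<Longrightarrow> {v, s} \<in> E"
      "\<And>c q. c < k \<Longrightarrow> (\<rho> ++ h) (X i c) = Some q \<Longrightarrow> bit v c = q" by blast
    have "heavy (h(x \<mapsto> bit v b)) = insert i (heavy h)"
      using new heavy_update[of h i b, OF hx ib(2,1)] xib by auto
    with embeds_insert[OF f new(1) v] dom xib show ?thesis unfolding admissible_def by metis
  qed
qed

lemma no_refutation:
  assumes "\<And>C. C \<in> set P \<Longrightarrow> \<not> satisfies \<rho> C \<Longrightarrow> card (vars C - dom \<rho>) < \<theta> * t"
  shows "\<not> is_refutation (Psi k m E) P"
proof -
  interpret extension_strategy "insert Y (pigeon_vars k m)" \<rho> "Collect admissible" "\<theta> * t"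
  proof
    show "finite (insert Y (pigeon_vars k m))" by (simp add: finite_pigeon_vars)
    show "dom h \<inter> dom \<rho> = {}" if "h \<in> Collect admissible" for h
      using that unfolding admissible_def by auto
    show "\<exists>p. h(x \<mapsto> p) \<in> Collect admissible"
      if "h \<in> Collect admissible" "card (dom h) < \<theta> * t"
         "x \<in> insert Y (pigeon_vars k m) - dom \<rho> - dom h" for h x
      using that admissible_extend rho_Y by auto
  qed (simp_all add: admissible_empty admissible_restrict)
  show ?thesis
    using assms vars_Psi admissible_not_falsifies_Psi
    by (intro no_refutation_by_extension_strategy) simp_all
qed

end

section \<open>Random block restrictions\<close>

text \<open>The bits \<open>2j\<close> and \<open>2j+1\<close> of pigeon \<open>i\<close> form the block \<open>(i, j)\<close>. The value
\<open>\<sigma> (i, j) \<in> {0..3}\<close> fixes bit \<open>2j + \<sigma> (i, j) mod 2\<close> to \<open>\<sigma> (i, j) div 2\<close> and leaves the other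
bit of the block free; for odd \<open>k\<close> the last bit is not in any block and stays free.\<close>

definition block_restriction :: "nat \<Rightarrow> nat \<Rightarrow> (nat \<times> nat \<Rightarrow> nat) \<Rightarrow> var \<rightharpoonup> bool" where
  "block_restriction k m \<sigma> x = (case x of
       Y \<Rightarrow> Some True
     | X i b \<Rightarrow> (if i < m \<and> b div 2 < k div 2 \<and> b mod 2 = \<sigma> (i, b div 2) mod 2
                 then Some (\<sigma> (i, b div 2) div 2 = 1) else None))"

lemma block_restriction_Y [simp]: "block_restriction k m \<sigma> Y = Some True"
  unfolding block_restriction_def by simp

lemma card_free_bits_block_restriction:
  assumes "i < m"
  shows "k div 2 \<le> card {b. b < k \<and> block_restriction k m \<sigma> (X i b) = None}"
proof -
  let ?free = "\<lambda>j. 2 * j + (1 - \<sigma> (i, j) mod 2)"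
  have free_div: "?free j div 2 = j" "?free j mod 2 \<noteq> \<sigma> (i, j) mod 2" for j
    by (cases "\<sigma> (i, j) mod 2 = 0"; simp add: mod2_eq_if)+
  then have inj: "inj_on ?free {..<k div 2}" by (intro inj_onI) metis
  have "?free ` {..<k div 2} \<subseteq> {b. b < k \<and> block_restriction k m \<sigma> (X i b) = None}"
  proof (intro subsetI, elim imageE)
    fix b j assume b: "b = ?free j" and j: "j \<in> {..<k div 2}"
    then have "b < k" by auto
    with b free_div show "b \<in> {b. b < k \<and> block_restriction k m \<sigma> (X i b) = None}"
      by (simp add: block_restriction_def)
  qed
  then have "card (?free ` {..<k div 2}) \<le> card {b. b < k \<and> block_restriction k m \<sigma> (X i b) = None}"
    by (intro card_mono) auto
  then show ?thesis using inj by (simp add: card_image)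
qed

definition blocks :: "nat \<Rightarrow> var clause \<Rightarrow> (nat \<times> nat) set" where
  "blocks k C = {(i, b div 2) | i b. X i b \<in> vars C \<and> b div 2 < k div 2}"

lemma blocks_subset:
  "vars C \<subseteq> insert Y (pigeon_vars k m) \<Longrightarrow> blocks k C \<subseteq> {..<m} \<times> {..<k div 2}"
  unfolding blocks_def pigeon_vars_def by auto

lemma card_vars_le_blocks:
  assumes C: "vars C \<subseteq> insert Y (pigeon_vars k m)"
  shows "card (vars C - {Y}) \<le> 2 * card (blocks k C) + m"
proof -
  have fin: "finite (blocks k C)"
    using blocks_subset[OF C] by (rule finite_subset) auto
  let ?in_block = "\<lambda>((i, j), r). X i (2 * j + r)"
  have "vars C - {Y} \<subseteq> ?in_block ` (blocks k C \<times> {0, 1}) \<union> (\<lambda>i. X i (k - 1)) ` {..<m}"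
  proof
    fix x assume x: "x \<in> vars C - {Y}"
    then obtain i b where xb: "x = X i b" "i < m" "b < k" using C unfolding pigeon_vars_def by auto
    show "x \<in> ?in_block ` (blocks k C \<times> {0, 1}) \<union> (\<lambda>i. X i (k - 1)) ` {..<m}"
    proof (cases "b div 2 < k div 2")
      case True
      then have "((i, b div 2), b mod 2) \<in> blocks k C \<times> {0, 1}"
        using x xb unfolding blocks_def by auto
      moreover have "?in_block ((i, b div 2), b mod 2) = x" using xb by simp
      ultimately show ?thesis by (metis (no_types, lifting) UnI1 image_eqI)
    next
      case False
      then show ?thesis using xb by (auto intro!: image_eqI[of _ _ i] simp: le_div_geq)
    qed
  qed
  then have "card (vars C - {Y})
               \<le> card (?in_block ` (blocks k C \<times> {0, 1}) \<union> (\<lambda>i. X i (k - 1)) ` {..<m})"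
    using fin by (intro card_mono) auto
  also have "\<dots> \<le> card (?in_block ` (blocks k C \<times> {0, 1})) + card ((\<lambda>i. X i (k - 1)) ` {..<m})"
    by (rule card_Un_le)
  also have "\<dots> \<le> card (blocks k C \<times> {0::nat, 1}) + card {..<m}"
    by (intro add_mono card_image_le) (use fin in auto)
  finally show ?thesis using fin by (simp add: card_cartesian_product)
qed

lemma card_PiE_avoiding:
  assumes "finite A" "B \<subseteq> A" "\<And>a. a \<in> B \<Longrightarrow> s a < n"
  shows "card {\<sigma> \<in> Pi\<^sub>E A (\<lambda>_. {..<n}). \<forall>a\<in>B. \<sigma> a \<noteq> s a} = (n - 1) ^ card B * n ^ (card A - card B)"
proof -
  let ?F = "\<lambda>a. if a \<in> B then {..<n} - {s a} else {..<n}"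
  have "{\<sigma> \<in> Pi\<^sub>E A (\<lambda>_. {..<n}). \<forall>a\<in>B. \<sigma> a \<noteq> s a} = Pi\<^sub>E A ?F"
    using assms(2) unfolding PiE_def Pi_def extensional_def by (auto split: if_splits)
  moreover have "card (Pi\<^sub>E A ?F) = (\<Prod>a\<in>B. card (?F a)) * (\<Prod>a\<in>A - B. card (?F a))"
    using assms(1,2) by (simp add: card_PiE prod.subset_diff mult.commute)
  moreover have "(\<Prod>a\<in>B. card (?F a)) = (n - 1) ^ card B"
    using assms(3) by simp
  moreover have "(\<Prod>a\<in>A - B. card (?F a)) = n ^ (card A - card B)"
    using assms(1,2) by (simp add: card_Diff_subset finite_subset)
  ultimately show ?thesis by simp
qed

lemma satisfying_block_value:
  assumes C: "vars C \<subseteq> insert Y (pigeon_vars k m)" and a: "a \<in> blocks k C"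
  shows "\<exists>s<4. \<forall>\<sigma>. \<sigma> a = s \<longrightarrow> satisfies (block_restriction k m \<sigma>) C"
proof -
  obtain i b where ib: "a = (i, b div 2)" "X i b \<in> vars C" "b div 2 < k div 2"
    using a unfolding blocks_def by auto
  then obtain p where p: "(X i b, p) \<in> C" unfolding vars_def by force
  have "i < m" using C ib(2) unfolding pigeon_vars_def by auto
  then have "satisfies (block_restriction k m \<sigma>) C" if "\<sigma> a = b mod 2 + (if p then 2 else 0)" for \<sigma>
    using that ib p unfolding satisfies_def by (force simp: block_restriction_def)
  then show ?thesis by (intro exI[of _ "b mod 2 + (if p then 2 else 0)"]) auto
qed

lemma card_not_satisfies_block_restriction:
  assumes C: "vars C \<subseteq> insert Y (pigeon_vars k m)"
  shows "real (card {\<sigma> \<in> Pi\<^sub>E ({..<m} \<times> {..<k div 2}) (\<lambda>_. {..<4}).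
                       \<not> satisfies (block_restriction k m \<sigma>) C})
         \<le> 4 ^ (m * (k div 2)) * (3 / 4) ^ card (blocks k C)"
proof -
  let ?A = "{..<m} \<times> {..<k div 2}" and ?b = "card (blocks k C)"
  obtain s where s: "\<And>a. a \<in> blocks k C \<Longrightarrow> s a < 4 \<and>
                        (\<forall>\<sigma>. \<sigma> a = s a \<longrightarrow> satisfies (block_restriction k m \<sigma>) C)"
    using satisfying_block_value[OF C] by metis
  have B: "blocks k C \<subseteq> ?A" using blocks_subset[OF C] .
  then have b_le: "?b \<le> m * (k div 2)"
    using card_mono[of ?A "blocks k C"] by (simp add: card_cartesian_product)
  have "card {\<sigma> \<in> Pi\<^sub>E ?A (\<lambda>_. {..<4}). \<not> satisfies (block_restriction k m \<sigma>) C}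
        \<le> card {\<sigma> \<in> Pi\<^sub>E ?A (\<lambda>_. {..<4::nat}). \<forall>a\<in>blocks k C. \<sigma> a \<noteq> s a}"
  proof (rule card_mono)
    show "finite {\<sigma> \<in> Pi\<^sub>E ?A (\<lambda>_. {..<4::nat}). \<forall>a\<in>blocks k C. \<sigma> a \<noteq> s a}"
      by (rule finite_subset[of _ "Pi\<^sub>E ?A (\<lambda>_. {..<4})"]) (auto intro: finite_PiE)
  qed (use s in auto)
  also have "\<dots> = 3 ^ ?b * 4 ^ (m * (k div 2) - ?b)"
    using card_PiE_avoiding[of ?A "blocks k C" s 4] B s by (simp add: card_cartesian_product)
  finally have "real (card {\<sigma> \<in> Pi\<^sub>E ?A (\<lambda>_. {..<4}). \<not> satisfies (block_restriction k m \<sigma>) C})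
                \<le> 3 ^ ?b * 4 ^ (m * (k div 2) - ?b)"
    by (metis (mono_tags, lifting) of_nat_le_iff of_nat_mult of_nat_numeral of_nat_power)
  also have "(3::real) ^ ?b * 4 ^ (m * (k div 2) - ?b) = 4 ^ (m * (k div 2)) * (3 / 4) ^ ?b"
    using b_le by (simp add: power_divide power_diff)
  finally show ?thesis .
qed

lemma exists_avoiding_by_union_bound:
  assumes S: "finite S" "S \<noteq> {}"
    and bound: "\<And>t. t < n \<Longrightarrow> real (card {x \<in> S. Q t x}) \<le> q * real (card S)"
    and small: "real n * q < 1"
  shows "\<exists>x\<in>S. \<forall>t<n. \<not> Q t x"
proof (rule ccontr)
  assume "\<not> ?thesis"
  then have "S \<subseteq> (\<Union>t<n. {x \<in> S. Q t x})" by auto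
  then have "card S \<le> card (\<Union>t<n. {x \<in> S. Q t x})" by (rule card_mono[rotated]) (use S in auto)
  also have "\<dots> \<le> (\<Sum>t<n. card {x \<in> S. Q t x})" by (rule card_UN_le) simp
  finally have "real (card S) \<le> real (\<Sum>t<n. card {x \<in> S. Q t x})" by (rule of_nat_mono)
  also have "\<dots> \<le> (\<Sum>t<n. q * real (card S))"
    unfolding of_nat_sum by (intro sum_mono bound) simp
  also have "\<dots> < real (card S)"
    using small S by (simp add: card_gt_0_iff)
  finally show False by simp
qed

lemma card_wide_not_satisfied_le:
  assumes C: "vars C \<subseteq> insert Y (pigeon_vars k m)"
  defines "S \<equiv> Pi\<^sub>E ({..<m} \<times> {..<k div 2}) (\<lambda>_. {..<4::nat})"
  shows "real (card {\<sigma> \<in> S. \<not> satisfies (block_restriction k m \<sigma>) C \<and>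
                             w \<le> card (vars C - dom (block_restriction k m \<sigma>))})
         \<le> (3 / 4) powr ((real w - real m) / 2) * real (card S)"
proof (cases "w \<le> 2 * card (blocks k C) + m")
  case True
  then have "real w \<le> real (2 * card (blocks k C) + m)" by (rule of_nat_mono)
  then have "(real w - real m) / 2 \<le> real (card (blocks k C))" by simp
  then have pow: "(3 / 4) ^ card (blocks k C) \<le> (3 / 4 :: real) powr ((real w - real m) / 2)"
    by (simp add: powr_realpow[symmetric] powr_mono')
  have "finite S" unfolding S_def by (simp add: finite_PiE)
  then have "real (card {\<sigma> \<in> S. \<not> satisfies (block_restriction k m \<sigma>) C \<and>
                             w \<le> card (vars C - dom (block_restriction k m \<sigma>))})
        \<le> real (card {\<sigma> \<in> S. \<not> satisfies (block_restriction k m \<sigma>) C})"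
    by (intro of_nat_mono card_mono) auto
  also have "\<dots> \<le> 4 ^ (m * (k div 2)) * (3 / 4) ^ card (blocks k C)"
    unfolding S_def by (rule card_not_satisfies_block_restriction[OF C])
  also have "\<dots> \<le> 4 ^ (m * (k div 2)) * (3 / 4) powr ((real w - real m) / 2)"
    using pow by (rule mult_left_mono) simp
  also have "(4::real) ^ (m * (k div 2)) = real (card S)"
    unfolding S_def by (simp add: card_PiE card_cartesian_product)
  finally show ?thesis by (simp only: mult.commute)
next
  case False
  have "finite (vars C - {Y})"
    by (rule finite_subset[OF _ finite_pigeon_vars]) (use C in auto)
  then have "card (vars C - dom (block_restriction k m \<sigma>)) \<le> card (vars C - {Y})" for \<sigma>
    by (intro card_mono) auto
  then have "card (vars C - dom (block_restriction k m \<sigma>)) < w" for \<sigma>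
    using card_vars_le_blocks[OF C] False by (meson le_trans not_le)
  then have "{\<sigma> \<in> S. \<not> satisfies (block_restriction k m \<sigma>) C \<and>
                             w \<le> card (vars C - dom (block_restriction k m \<sigma>))} = {}"
    by (auto simp: not_le[symmetric])
  then show ?thesis by (simp only: card.empty of_nat_0) simp
qed

lemma exists_narrow_block_restriction:
  assumes R: "is_refutation (Psi k m E) P"
    and small: "real (length P) * (3 / 4) powr ((real w - real m) / 2) < 1"
  shows "\<exists>\<sigma>. \<forall>C\<in>set P. \<not> satisfies (block_restriction k m \<sigma>) C \<longrightarrow>
                        card (vars C - dom (block_restriction k m \<sigma>)) < w"
proof -
  let ?S = "Pi\<^sub>E ({..<m} \<times> {..<k div 2}) (\<lambda>_. {..<4::nat})"
  have "\<exists>\<sigma>\<in>?S. \<forall>t<length P. \<not> (\<not> satisfies (block_restriction k m \<sigma>) (P ! t) \<and>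
                        w \<le> card (vars (P ! t) - dom (block_restriction k m \<sigma>)))"
  proof (rule exists_avoiding_by_union_bound)
    show "finite ?S" "?S \<noteq> {}" by (auto simp: finite_PiE PiE_eq_empty_iff lessThan_empty_iff)
    show "real (length P) * (3 / 4) powr ((real w - real m) / 2) < 1" by (rule small)
    show "real (card {\<sigma> \<in> ?S. \<not> satisfies (block_restriction k m \<sigma>) (P ! t) \<and>
                        w \<le> card (vars (P ! t) - dom (block_restriction k m \<sigma>))})
          \<le> (3 / 4) powr ((real w - real m) / 2) * real (card ?S)" if "t < length P" for t
      using card_wide_not_satisfied_le[OF refutation_vars_subset[OF R vars_Psi[of _ k m E] that]] .
  qed
  then obtain \<sigma> where "\<forall>t<length P. \<not> satisfies (block_restriction k m \<sigma>) (P ! t) \<longrightarrow>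
                        card (vars (P ! t) - dom (block_restriction k m \<sigma>)) < w"
    by (auto simp: not_le)
  then show ?thesis by (metis in_set_conv_nth)
qed

lemma refutation_length_lower_bound:
  assumes ext: "extension_property k (k div 16) (k - k div 2 + k div 4) E"
    and R: "is_refutation (Psi k m E) P" and k: "4 \<le> k"
  shows "1 \<le> real (length P) * (3 / 4) powr ((real (k div 4 * (k div 16)) - real m) / 2)"
proof (rule ccontr)
  assume "\<not> ?thesis"
  then obtain \<sigma> where narrow: "\<And>C. C \<in> set P \<Longrightarrow> \<not> satisfies (block_restriction k m \<sigma>) C \<Longrightarrow>
      card (vars C - dom (block_restriction k m \<sigma>)) < k div 4 * (k div 16)"
    using exists_narrow_block_restriction[OF R] by (meson not_le)
  interpret delayer_strategy k m "k div 16" "k - k div 2 + k div 4" "k div 4" E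
      "block_restriction k m \<sigma>"
    by unfold_locales (use k ext card_free_bits_block_restriction in auto)
  from narrow have "\<not> is_refutation (Psi k m E) P" by (rule no_refutation)
  with R show False by simp
qed

section \<open>Extension properties of random graphs\<close>

lemma card_subsets_split:
  assumes U: "finite U" and W: "W \<subseteq> U" and invariant: "\<And>E. P E = P (E - W)"
  shows "card {E. E \<subseteq> U \<and> P E} = 2 ^ card W * card {E. E \<subseteq> U - W \<and> P E}"
    and "card {E. E \<subseteq> U \<and> P E \<and> W \<subseteq> E} = card {E. E \<subseteq> U - W \<and> P E}"
proof -
  let ?N = "card {E. E \<subseteq> U - W \<and> P E}"
  let ?slice = "\<lambda>D. {E. E \<subseteq> U \<and> P E \<and> E \<inter> W = D}"
  have slice: "card (?slice D) = ?N" if D: "D \<subseteq> W" for D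
  proof (rule bij_betw_same_card[of "\<lambda>E. E - W"], rule bij_betw_byWitness[where f' = "\<lambda>E. E \<union> D"])
    show "(\<lambda>E. E \<union> D) ` {E. E \<subseteq> U - W \<and> P E} \<subseteq> ?slice D"
    proof
      fix E' assume "E' \<in> (\<lambda>E. E \<union> D) ` {E. E \<subseteq> U - W \<and> P E}"
      then obtain E where E: "E \<subseteq> U - W" "P E" "E' = E \<union> D" by auto
      then have "E' - W = E" using D by auto
      then show "E' \<in> ?slice D" using E D W invariant[of E'] by auto
    qed
  qed (use D invariant in auto)
  have "{E. E \<subseteq> U \<and> P E} = (\<Union>D\<in>Pow W. ?slice D)" by auto
  also have "card \<dots> = (\<Sum>D\<in>Pow W. card (?slice D))"
    using U W by (intro card_UN_disjoint) (auto intro: finite_subset)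
  also have "\<dots> = 2 ^ card W * ?N"
    using slice U W by (simp add: card_Pow finite_subset)
  finally show "card {E. E \<subseteq> U \<and> P E} = 2 ^ card W * ?N" .
  have "{E. E \<subseteq> U \<and> P E \<and> W \<subseteq> E} = ?slice W" by auto
  then show "card {E. E \<subseteq> U \<and> P E \<and> W \<subseteq> E} = ?N" using slice[of W] by simp
qed

lemma card_subsets_avoiding:
  assumes U: "finite U" and T: "finite T" and W: "\<And>v. v \<in> T \<Longrightarrow> W v \<subseteq> U"
    and disjoint: "\<And>v v'. v \<in> T \<Longrightarrow> v' \<in> T \<Longrightarrow> v \<noteq> v' \<Longrightarrow> W v \<inter> W v' = {}"
  shows "real (card {E. E \<subseteq> U \<and> (\<forall>v\<in>T. \<not> W v \<subseteq> E)})
           = 2 ^ card U * (\<Prod>v\<in>T. 1 - 1 / 2 ^ card (W v))"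
  using T W disjoint
proof (induction T rule: finite_induct)
  case empty
  have "{E. E \<subseteq> U \<and> (\<forall>v\<in>{}. \<not> W v \<subseteq> E)} = Pow U" by auto
  then show ?case using U by (simp add: card_Pow)
next
  case (insert v0 T)
  let ?P = "\<lambda>E. \<forall>v\<in>T. \<not> W v \<subseteq> E"
  let ?A = "{E. E \<subseteq> U \<and> ?P E}" and ?N = "card {E. E \<subseteq> U - W v0 \<and> ?P E}"
  have W0: "W v0 \<subseteq> U" using insert.prems by auto
  have invariant: "?P E = ?P (E - W v0)" for E
    using insert.hyps(2) insert.prems(2)[of _ v0] by blast
  have A: "card ?A = 2 ^ card (W v0) * ?N"
    by (rule card_subsets_split(1)[where P = ?P, OF U W0 invariant])
  have "{E. E \<subseteq> U \<and> (\<forall>v\<in>insert v0 T. \<not> W v \<subseteq> E)} = ?A - {E. E \<subseteq> U \<and> ?P E \<and> W v0 \<subseteq> E}"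
    by auto
  moreover have "card {E. E \<subseteq> U \<and> ?P E \<and> W v0 \<subseteq> E} = ?N"
    by (rule card_subsets_split(2)[where P = ?P, OF U W0 invariant])
  ultimately have "card {E. E \<subseteq> U \<and> (\<forall>v\<in>insert v0 T. \<not> W v \<subseteq> E)} = card ?A - ?N"
    using U by (simp only:) (subst card_Diff_subset, auto)
  then have "real (card {E. E \<subseteq> U \<and> (\<forall>v\<in>insert v0 T. \<not> W v \<subseteq> E)})
               = real (card ?A) * (1 - 1 / 2 ^ card (W v0))"
    using A by (simp add: of_nat_diff field_simps)
  also have "\<dots> = 2 ^ card U * (\<Prod>v\<in>insert v0 T. 1 - 1 / 2 ^ card (W v))"
    using insert by simp
  finally show ?case .
qed

lemma card_subcube:
  assumes I: "I \<subseteq> {..<k}"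
  shows "2^(k - card I) \<le> card (subcube k I a)"
proof -
  let ?J = "{..<k} - I"
  let ?g = "\<lambda>A. nat_of_bits k (\<lambda>b. if b \<in> I then bit a b else b \<in> A)"
  have inj: "inj_on ?g (Pow ?J)"
  proof (rule inj_onI)
    fix A A' assume A: "A \<in> Pow ?J" and A': "A' \<in> Pow ?J" and e: "?g A = ?g A'"
    show "A = A'"
    proof (rule set_eqI)
      fix b
      show "b \<in> A \<longleftrightarrow> b \<in> A'"
      proof (cases "b \<in> ?J")
        case True
        have "bit (?g A) b = bit (?g A') b" using e by simp
        then show ?thesis using True by (simp add: bit_nat_of_bits)
      next
        case False then show ?thesis using A A' by auto
      qed
    qed
  qed
  have sub: "?g ` Pow ?J \<subseteq> subcube k I a"
    unfolding subcube_def using I by (auto simp: nat_of_bits_less bit_nat_of_bits)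
  have "card (Pow ?J) = 2 ^ (k - card I)"
    using I by (simp add: card_Pow card_Diff_subset finite_subset)
  moreover have "card (?g ` Pow ?J) = card (Pow ?J)" using inj by (rule card_image)
  moreover have "card (?g ` Pow ?J) \<le> card (subcube k I a)"
    using sub by (rule card_mono[rotated]) (auto simp: subcube_def)
  ultimately show ?thesis by simp
qed

lemma card_small_sets:
  assumes V: "finite V" "V \<noteq> {}"
  shows "card {S. S \<subseteq> V \<and> card S < t} \<le> 2 * card V ^ t"
proof -
  let ?L = "{xs. set xs \<subseteq> V \<and> length xs = t}"
  have "{S. S \<subseteq> V \<and> card S < t} \<subseteq> insert {} (set ` ?L)"
  proof (intro subsetI CollectI, elim CollectE conjE)
    fix S assume S: "S \<subseteq> V" "card S < t"
    show "S \<in> insert {} (set ` ?L)"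
    proof (cases "S = {}")
      case False
      obtain xs where xs: "set xs = S" "distinct xs"
        using finite_distinct_list finite_subset[OF S(1) V(1)] by blast
      with False have "set (xs @ replicate (t - card S) (hd xs)) = S" by auto
      moreover have "length (xs @ replicate (t - card S) (hd xs)) = t"
        using xs S(2) distinct_card by fastforce
      ultimately show ?thesis using S(1) by blast
    qed simp
  qed
  then have "card {S. S \<subseteq> V \<and> card S < t} \<le> card (insert {} (set ` ?L))"
    using V by (intro card_mono) (auto simp: finite_lists_length_eq)
  also have "\<dots> \<le> Suc (card ?L)"
    using V card_image_le[of ?L set] by (simp add: card_insert_if finite_lists_length_eq)
  also have "\<dots> \<le> 2 * card V ^ t"
    using V card_gt_0_iff[of V] by (simp add: card_lists_length_eq Suc_le_eq)
  finally show ?thesis .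
qed

lemma finite_vertex_pairs: "finite (vertex_pairs k)"
proof -
  have "vertex_pairs k \<subseteq> Pow {..<2^k}" unfolding vertex_pairs_def by auto
  then show ?thesis by (rule finite_subset) auto
qed

definition missing_common_neighbour :: "nat \<Rightarrow> nat set \<Rightarrow> nat set \<Rightarrow> nat set set set" where
  "missing_common_neighbour k S Q = {E. E \<subseteq> vertex_pairs k \<and> (\<forall>v\<in>Q - S. \<not> (\<forall>s\<in>S. {v,s} \<in> E))}"

lemma card_missing_common_neighbour:
  assumes S: "S \<subseteq> {..<2^k}" and Q: "Q \<subseteq> {..<2^k}"
  shows "real (card (missing_common_neighbour k S Q))
           = 2 ^ card (vertex_pairs k) * (1 - 1 / 2 ^ card S) ^ card (Q - S)"
proof -
  let ?W = "\<lambda>v. (\<lambda>s. {v,s}) ` S"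
  have eqF: "missing_common_neighbour k S Q = {E. E \<subseteq> vertex_pairs k \<and> (\<forall>v\<in>Q - S. \<not> ?W v \<subseteq> E)}"
    unfolding missing_common_neighbour_def by auto
  have fQ: "finite (Q - S)" using Q finite_subset by blast
  have WU: "\<And>v. v \<in> Q - S \<Longrightarrow> ?W v \<subseteq> vertex_pairs k" using S Q unfolding vertex_pairs_def by blast
  have dj: "\<And>v v'. v \<in> Q - S \<Longrightarrow> v' \<in> Q - S \<Longrightarrow> v \<noteq> v' \<Longrightarrow> ?W v \<inter> ?W v' = {}"
    by (auto simp: doubleton_eq_iff)
  have cW: "card (?W v) = card S" if "v \<in> Q - S" for v
  proof -
    have "inj_on (\<lambda>s. {v,s}) S" using that by (auto simp: inj_on_def doubleton_eq_iff)
    then show ?thesis by (rule card_image)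
  qed
  have "real (card (missing_common_neighbour k S Q))
          = 2 ^ card (vertex_pairs k) * (\<Prod>v\<in>Q - S. 1 - 1 / 2 ^ card (?W v))"
    unfolding eqF by (rule card_subsets_avoiding[OF finite_vertex_pairs fQ WU dj])
  also have "(\<Prod>v\<in>Q - S. 1 - 1/2^card (?W v)) = (\<Prod>v\<in>Q - S. 1 - 1/(2::real)^card S)"
    using cW by (intro prod.cong) auto
  finally show ?thesis by simp
qed

lemma card_missing_common_neighbour_subcube_le:
  assumes S: "S \<subseteq> {..<2 ^ k}" "card S < t" and I: "I \<subseteq> {..<k}" "card I \<le> D" and "D \<le> k"
  shows "real (card (missing_common_neighbour k S (subcube k I a)))
           \<le> 2 ^ card (vertex_pairs k) * (1 - 1 / 2 ^ t) ^ (2 ^ (k - D) - t)"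
proof -
  have "(2::nat) ^ (k - D) \<le> 2 ^ (k - card I)" using I \<open>D \<le> k\<close> by (intro power_increasing) auto
  also have "\<dots> \<le> card (subcube k I a)" using card_subcube[OF I(1)] .
  also have "card (subcube k I a) - card S \<le> card (subcube k I a - S)"
    by (rule diff_card_le_card_Diff) (use S finite_subset in auto)
  finally have n: "2 ^ (k - D) - t \<le> card (subcube k I a - S)" using S by linarith
  have "(2::real) ^ card S \<le> 2 ^ t" using S by (intro power_increasing) auto
  then have "1 - 1 / (2::real) ^ card S \<le> 1 - 1 / 2 ^ t" by (simp add: frac_le)
  then have "(1 - 1 / (2::real) ^ card S) ^ card (subcube k I a - S)
               \<le> (1 - 1 / 2 ^ t) ^ card (subcube k I a - S)"
    by (rule power_mono) simp
  also have "\<dots> \<le> (1 - 1 / 2 ^ t) ^ (2 ^ (k - D) - t)" using n by (intro power_decreasing) auto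
  finally have pow: "(1 - 1 / (2::real) ^ card S) ^ card (subcube k I a - S)
                       \<le> (1 - 1 / 2 ^ t) ^ (2 ^ (k - D) - t)" .
  have "subcube k I a \<subseteq> {..<2 ^ k}" unfolding subcube_def by auto
  then have "real (card (missing_common_neighbour k S (subcube k I a)))
               = 2 ^ card (vertex_pairs k) * (1 - 1 / 2 ^ card S) ^ card (subcube k I a - S)"
    by (rule card_missing_common_neighbour[OF S(1)])
  also have "\<dots> \<le> 2 ^ card (vertex_pairs k) * (1 - 1 / 2 ^ t) ^ (2 ^ (k - D) - t)"
    using pow by (rule mult_left_mono) simp
  finally show ?thesis .
qed

lemma not_extension_property_subset:
  "{E. E \<subseteq> vertex_pairs k \<and> \<not> extension_property k t D E}
     \<subseteq> (\<Union>S\<in>{S. S \<subseteq> {..<2 ^ k} \<and> card S < t}.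
          \<Union>(I, a)\<in>{I. I \<subseteq> {..<k} \<and> card I \<le> D} \<times> {..<2 ^ k}.
            missing_common_neighbour k S (subcube k I a))"
proof (intro subsetI, elim CollectE conjE)
  fix E assume E: "E \<subseteq> vertex_pairs k" and "\<not> extension_property k t D E"
  then obtain S I a where S: "S \<subseteq> {..<2 ^ k}" "card S < t" and I: "I \<subseteq> {..<k}" "card I \<le> D"
    and a: "a < 2 ^ k" and none: "\<not> (\<exists>v \<in> subcube k I a - S. \<forall>s\<in>S. {v, s} \<in> E)"
    unfolding extension_property_def by auto
  from E none have "E \<in> missing_common_neighbour k S (subcube k I a)"
    unfolding missing_common_neighbour_def by auto
  with S I a show "E \<in> (\<Union>S\<in>{S. S \<subseteq> {..<2 ^ k} \<and> card S < t}.
          \<Union>(I, a)\<in>{I. I \<subseteq> {..<k} \<and> card I \<le> D} \<times> {..<2 ^ k}.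
            missing_common_neighbour k S (subcube k I a))"
    by (intro UN_I[of S] UN_I[of "(I, a)"]) auto
qed

lemma card_not_extension_property:
  assumes "D \<le> k"
  shows "real (card {E. E \<subseteq> vertex_pairs k \<and> \<not> extension_property k t D E})
    \<le> 2 * 2 ^ (k * t) * 4 ^ k * 2 ^ card (vertex_pairs k) * (1 - 1 / 2 ^ t) ^ (2 ^ (k - D) - t)"
proof -
  let ?SS = "{S. S \<subseteq> {..<(2::nat) ^ k} \<and> card S < t}"
  let ?IA = "{I. I \<subseteq> {..<k} \<and> card I \<le> D} \<times> {..<(2::nat) ^ k}"
  let ?F = "\<lambda>S (I, a). missing_common_neighbour k S (subcube k I a)"
  let ?b = "2 ^ card (vertex_pairs k) * (1 - 1 / 2 ^ t) ^ (2 ^ (k - D) - t) :: real"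
  have fin: "finite ?SS" "finite ?IA" by auto
  have "card ?SS \<le> 2 * card {..<(2::nat) ^ k} ^ t"
    by (rule card_small_sets) (simp_all add: lessThan_empty_iff)
  then have "card ?SS \<le> 2 * 2 ^ (k * t)" by (simp add: power_mult)
  then have card_SS: "real (card ?SS) \<le> 2 * 2 ^ (k * t)" using of_nat_mono by fastforce
  have "card ?IA \<le> card (Pow {..<k} \<times> {..<(2::nat) ^ k})" by (intro card_mono) auto
  then have "card ?IA \<le> 4 ^ k"
    by (simp add: card_cartesian_product card_Pow power_mult_distrib[symmetric])
  then have card_IA: "real (card ?IA) \<le> 4 ^ k" using of_nat_mono by fastforce
  have F_le: "real (card (?F S p)) \<le> ?b" if "S \<in> ?SS" "p \<in> ?IA" for S p
    using that card_missing_common_neighbour_subcube_le[OF _ _ _ _ assms] by auto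
  have "card {E. E \<subseteq> vertex_pairs k \<and> \<not> extension_property k t D E} \<le> card (\<Union>S\<in>?SS. \<Union>p\<in>?IA. ?F S p)"
    using not_extension_property_subset fin finite_vertex_pairs
    by (intro card_mono) (auto simp: missing_common_neighbour_def)
  also have "\<dots> \<le> (\<Sum>S\<in>?SS. card (\<Union>p\<in>?IA. ?F S p))" by (rule card_UN_le) (rule fin)
  also have "\<dots> \<le> (\<Sum>S\<in>?SS. \<Sum>p\<in>?IA. card (?F S p))" by (intro sum_mono card_UN_le) (rule fin)
  finally have "real (card {E. E \<subseteq> vertex_pairs k \<and> \<not> extension_property k t D E})
                  \<le> real (\<Sum>S\<in>?SS. \<Sum>p\<in>?IA. card (?F S p))" by (rule of_nat_mono)
  also have "\<dots> = (\<Sum>S\<in>?SS. \<Sum>p\<in>?IA. real (card (?F S p)))" by simp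
  also have "\<dots> \<le> (\<Sum>S\<in>?SS. \<Sum>p\<in>?IA. ?b)" by (intro sum_mono F_le)
  also have "\<dots> = real (card ?SS) * real (card ?IA) * ?b" by simp
  also have "\<dots> \<le> (2 * 2 ^ (k * t)) * 4 ^ k * ?b"
    using card_SS card_IA by (intro mult_right_mono mult_mono) auto
  finally show ?thesis by (simp add: mult.assoc)
qed

lemma one_minus_power_le_exp:
  fixes a :: real
  assumes "0 \<le> a" "a \<le> 1"
  shows "(1 - a) ^ N \<le> exp (- (a * real N))"
proof -
  have "(1 - a) ^ N \<le> exp (- a) ^ N"
    using assms exp_ge_add_one_self[of "- a"] by (intro power_mono) auto
  then show ?thesis by (simp add: exp_of_nat_mult[symmetric] mult.commute)
qed

lemma real_div_ge:
  assumes "0 < d"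
  shows "real n / real d - 1 \<le> real (n div d)"
proof -
  have "n < d * (n div d) + d"
    using assms by (metis add_less_cancel_left div_mult_mod_eq mod_less_divisor mult.commute)
  then have "real n < real d * real (n div d) + real d"
    by (metis of_nat_add of_nat_less_iff of_nat_mult)
  then show ?thesis using assms by (simp add: field_simps)
qed

lemma gnp_half_prob_not_extension_property_le:
  "gnp_half_prob k (\<lambda>E. \<not> extension_property k (k div 16) (k - k div 2 + k div 4) E)
     \<le> 2 * 2 powr (real k ^ 2 / 16) * 4 powr real k
         * exp (- (2 powr (real k / 4 - 1) - real k / 16) / 2 powr (real k / 16))"
proof -
  let ?t = "k div 16" and ?D = "k - k div 2 + k div 4"
  let ?a = "1 / (2::real) ^ ?t" and ?N = "2 ^ (k - ?D) - ?t"
  let ?num = "2 powr (real k / 4 - 1) - real k / 16"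
  have t_le: "real ?t \<le> real k / 16" by linarith
  have "(2::real) ^ (k * ?t) = 2 powr (real k * real ?t)" by (simp add: powr_realpow[symmetric])
  also have "\<dots> \<le> 2 powr (real k ^ 2 / 16)"
  proof (rule powr_mono)
    have "real k * real ?t \<le> real k * (real k / 16)" using t_le by (rule mult_left_mono) simp
    then show "real k * real ?t \<le> real k ^ 2 / 16" by (simp add: power2_eq_square)
  qed simp
  finally have b1: "(2::real) ^ (k * ?t) \<le> 2 powr (real k ^ 2 / 16)" .
  have "real k / 4 - 1 \<le> real (k - ?D)" using real_div_ge[of 4 k] by simp
  then have "2 powr (real k / 4 - 1) \<le> real ((2::nat) ^ (k - ?D))"
    by (simp add: powr_realpow[symmetric] powr_mono)
  then have N_ge: "?num \<le> real ?N" using t_le by linarith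
  have "(2::real) ^ ?t \<le> 2 powr (real k / 16)"
    using t_le by (simp add: powr_realpow[symmetric] powr_mono)
  then have "?num / 2 powr (real k / 16) \<le> ?a * real ?N"
    using N_ge by (simp add: frac_le divide_right_mono)
  then have "- (?a * real ?N) \<le> - ?num / 2 powr (real k / 16)" by (simp only: minus_divide_left)
  then have "exp (- (?a * real ?N)) \<le> exp (- ?num / 2 powr (real k / 16))" by (rule exp_mono)
  have "(1 - ?a) ^ ?N \<le> exp (- (?a * real ?N))" by (rule one_minus_power_le_exp) simp_all
  also note \<open>exp (- (?a * real ?N)) \<le> _\<close>
  finally have b3: "(1 - ?a) ^ ?N \<le> exp (- ?num / 2 powr (real k / 16))" .
  have "real (card {E. E \<subseteq> vertex_pairs k \<and> \<not> extension_property k ?t ?D E})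
          / real (card (Pow (vertex_pairs k))) \<le> 2 * 2 ^ (k * ?t) * 4 ^ k * (1 - ?a) ^ ?N"
    using card_not_extension_property[of ?D k ?t] finite_vertex_pairs
    by (simp add: card_Pow pos_divide_le_eq field_simps)
  also have "\<dots> \<le> 2 * 2 powr (real k ^ 2 / 16) * 4 powr real k * exp (- ?num / 2 powr (real k / 16))"
    using b1 b3 by (intro mult_mono) (simp_all add: powr_realpow)
  finally show ?thesis unfolding gnp_half_prob_def by simp
qed

lemma finite_graphs_with: "finite {E. E \<subseteq> vertex_pairs k \<and> P E}"
  by (rule finite_subset[of _ "Pow (vertex_pairs k)"]) (auto simp: finite_vertex_pairs)

lemma gnp_half_prob_le_1: "gnp_half_prob k P \<le> 1"
proof -
  have "card {E. E \<subseteq> vertex_pairs k \<and> P E} \<le> card (Pow (vertex_pairs k))"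
    by (rule card_mono) (auto simp: finite_vertex_pairs)
  then show ?thesis
    unfolding gnp_half_prob_def
    by (cases "card (Pow (vertex_pairs k)) = 0") (simp_all add: divide_le_eq_1)
qed

lemma gnp_half_prob_mono:
  assumes "\<And>E. E \<subseteq> vertex_pairs k \<Longrightarrow> P E \<Longrightarrow> Q E"
  shows "gnp_half_prob k P \<le> gnp_half_prob k Q"
proof -
  have "card {E. E \<subseteq> vertex_pairs k \<and> P E} \<le> card {E. E \<subseteq> vertex_pairs k \<and> Q E}"
    by (rule card_mono[OF finite_graphs_with]) (use assms in blast)
  then show ?thesis unfolding gnp_half_prob_def by (simp add: divide_right_mono)
qed

lemma gnp_half_prob_not: "gnp_half_prob k (\<lambda>E. \<not> P E) = 1 - gnp_half_prob k P"
proof -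
  have "Pow (vertex_pairs k) = {E. E \<subseteq> vertex_pairs k \<and> P E} \<union> {E. E \<subseteq> vertex_pairs k \<and> \<not> P E}"
    by blast
  then have "card (Pow (vertex_pairs k))
               = card ({E. E \<subseteq> vertex_pairs k \<and> P E} \<union> {E. E \<subseteq> vertex_pairs k \<and> \<not> P E})"
    by (rule arg_cong)
  also have "\<dots> = card {E. E \<subseteq> vertex_pairs k \<and> P E} + card {E. E \<subseteq> vertex_pairs k \<and> \<not> P E}"
    by (rule card_Un_disjoint[OF finite_graphs_with finite_graphs_with]) blast
  finally have split: "card (Pow (vertex_pairs k))
      = card {E. E \<subseteq> vertex_pairs k \<and> P E} + card {E. E \<subseteq> vertex_pairs k \<and> \<not> P E}" .
  have "card (Pow (vertex_pairs k)) > 0" by (auto simp: finite_vertex_pairs card_gt_0_iff)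
  moreover have "real (card {E. E \<subseteq> vertex_pairs k \<and> \<not> P E})
      = real (card (Pow (vertex_pairs k))) - real (card {E. E \<subseteq> vertex_pairs k \<and> P E})"
    using split by simp
  ultimately show ?thesis unfolding gnp_half_prob_def by (simp add: diff_divide_distrib)
qed

lemma extension_property_almost_surely:
  "(\<lambda>k. gnp_half_prob k (extension_property k (k div 16) (k - k div 2 + k div 4))) \<longlonglongrightarrow> 1"
proof -
  let ?g = "\<lambda>x::real. 2 * 2 powr (x ^ 2 / 16) * 4 powr x
                        * exp (- (2 powr (x / 4 - 1) - x / 16) / 2 powr (x / 16))"
  have "(?g \<longlongrightarrow> 0) at_top" by real_asymp
  then have "((\<lambda>k. ?g (real k)) \<longlongrightarrow> 0) sequentially"
    by (rule filterlim_compose[OF _ filterlim_real_sequentially])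
  then have lower: "((\<lambda>k. 1 - ?g (real k)) \<longlongrightarrow> 1) sequentially"
    using tendsto_diff[OF tendsto_const[of 1]] by fastforce
  have "1 - ?g (real k) \<le> gnp_half_prob k (extension_property k (k div 16) (k - k div 2 + k div 4))"
    for k using gnp_half_prob_not_extension_property_le[of k]
      gnp_half_prob_not[of k "extension_property k (k div 16) (k - k div 2 + k div 4)"] by linarith
  then show ?thesis
    by (intro tendsto_sandwich[OF always_eventually always_eventually lower tendsto_const])
       (simp_all add: gnp_half_prob_le_1)
qed

lemma res_length_Psi_lower_bound:
  assumes ext: "extension_property k (k div 16) (k - k div 2 + k div 4) E" and k: "4 \<le> k"
    and small: "2 powr (real k ^ 2 / 1000) * (3 / 4) powr ((real (k div 4 * (k div 16)) - real m) / 2)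
                  \<le> 1"
  shows "res_length (Psi k m E) = \<infinity> \<or>
           (\<exists>L. res_length (Psi k m E) = enat L \<and>
                real (2 ^ k) powr (1 / 1000 * log 2 (real (2 ^ k))) \<le> real L)"
proof -
  let ?q = "(3 / 4 :: real) powr ((real (k div 4 * (k div 16)) - real m) / 2)"
  have "real ((2::nat) ^ k) powr (1 / 1000 * log 2 (real (2 ^ k))) = 2 powr (real k ^ 2 / 1000)"
    by (simp add: powr_realpow[symmetric] powr_powr power2_eq_square)
  moreover have "2 powr (real k ^ 2 / 1000) \<le> real (length P)"
    if "is_refutation (Psi k m E) P" for P
  proof -
    have "2 powr (real k ^ 2 / 1000) * ?q \<le> real (length P) * ?q"
      using refutation_length_lower_bound[OF ext that k] small by linarith
    then show ?thesis by (simp add: mult_le_cancel_right_pos)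
  qed
  then have "res_length (Psi k m E) = \<infinity> \<or>
               (\<exists>L. res_length (Psi k m E) = enat L \<and> 2 powr (real k ^ 2 / 1000) \<le> real L)"
    by (rule res_length_lower_bound)
  ultimately show ?thesis by simp
qed

lemma three_quarters_powr_le:
  fixes z :: real
  assumes "0 \<le> z"
  shows "(3 / 4) powr z \<le> 2 powr (- z / 4)"
proof -
  have "(3 / 4 :: real) powr 4 \<le> 2 powr (- 1)"
    by (simp add: powr_numeral powr_minus_divide power_divide)
  then have "((3 / 4 :: real) powr 4) powr (z / 4) \<le> (2 powr (- 1)) powr (z / 4)"
    using assms by (intro powr_mono2) auto
  then show ?thesis by (simp only: powr_powr) simp
qed

lemma refutation_bound_small:
  fixes c :: real
  assumes k: "16 \<le> k" and m: "real m = c * real k"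
    and y: "real k ^ 2 / 1000 \<le> ((real k / 4 - 1) * (real k / 16 - 1) - c * real k) / 8"
  shows "2 powr (real k ^ 2 / 1000) * (3 / 4) powr ((real (k div 4 * (k div 16)) - real m) / 2) \<le> 1"
proof -
  let ?y = "((real k / 4 - 1) * (real k / 16 - 1) - c * real k) / 2"
  have "0 \<le> real k ^ 2 / 1000" by simp
  then have "0 \<le> ((real k / 4 - 1) * (real k / 16 - 1) - c * real k) / 8"
    using y by (rule order_trans)
  then have y_nonneg: "0 \<le> ?y" by (simp add: zero_le_divide_iff)
  have "(real k / 4 - 1) * (real k / 16 - 1) \<le> real (k div 4) * real (k div 16)"
    using real_div_ge[of 4 k] real_div_ge[of 16 k] k by (intro mult_mono) auto
  then have "(3 / 4 :: real) powr ((real (k div 4 * (k div 16)) - real m) / 2) \<le> (3 / 4) powr ?y"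
    unfolding m by (intro powr_mono') auto
  also have "\<dots> \<le> 2 powr (- ?y / 4)" using y_nonneg by (rule three_quarters_powr_le)
  finally have "2 powr (real k ^ 2 / 1000) * (3 / 4) powr ((real (k div 4 * (k div 16)) - real m) / 2)
                  \<le> 2 powr (real k ^ 2 / 1000) * 2 powr (- ?y / 4)"
    by (rule mult_left_mono) simp
  also have "\<dots> = 2 powr (real k ^ 2 / 1000 - ?y / 4)" by (simp add: powr_add[symmetric])
  also have "\<dots> \<le> 2 powr 0" using y by (intro powr_mono) auto
  finally show ?thesis by simp
qed

lemma eventually_refutation_bound_small:
  fixes c :: real
  shows "eventually (\<lambda>k. 16 \<le> k \<and> (\<forall>m. real m = c * real k \<longrightarrow>
           2 powr (real k ^ 2 / 1000) * (3 / 4) powr ((real (k div 4 * (k div 16)) - real m) / 2)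
             \<le> 1))
         sequentially"
proof -
  have "filterlim (\<lambda>x. ((x / 4 - 1) * (x / 16 - 1) - c * x) / 8 - x ^ 2 / 1000) at_top at_top"
    by real_asymp
  then have "filterlim (\<lambda>k. ((real k / 4 - 1) * (real k / 16 - 1) - c * real k) / 8 - real k ^ 2 / 1000)
               at_top sequentially"
    by (rule filterlim_compose[OF _ filterlim_real_sequentially])
  then have "eventually (\<lambda>k. 0 \<le> ((real k / 4 - 1) * (real k / 16 - 1) - c * real k) / 8
                                 - real k ^ 2 / 1000) sequentially"
    unfolding filterlim_at_top by (rule spec)
  moreover have "eventually (\<lambda>k. 16 \<le> k) sequentially" by (rule eventually_ge_at_top)
  ultimately show ?thesis
  proof eventually_elim
    case (elim k)
    then have "real k ^ 2 / 1000 \<le> ((real k / 4 - 1) * (real k / 16 - 1) - c * real k) / 8"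
      by linarith
    with elim(2) show ?case using refutation_bound_small by blast
  qed
qed

theorem mainTheorem4:
  fixes c :: real
  assumes "c > 0"
  shows "\<exists>\<epsilon>>0. \<forall>\<delta>>0. \<exists>K. \<forall>k m. k \<ge> K \<longrightarrow> real m = c * real k \<longrightarrow>
           gnp_half_prob k (\<lambda>E. res_length (Psi k m E) = \<infinity> \<or>
              (\<exists>L. res_length (Psi k m E) = enat L \<and>
                   real L \<ge> real (2^k) powr (\<epsilon> * log 2 (real (2^k)))))
           \<ge> 1 - \<delta>"
  (* The argument works for every c. *)
proof (intro exI[of _ "1 / 1000"] conjI allI impI)
  fix \<delta> :: real assume "\<delta> > 0"
  let ?ext = "\<lambda>k. extension_property k (k div 16) (k - k div 2 + k div 4)"
  let ?hard = "\<lambda>k m E. res_length (Psi k m E) = \<infinity> \<or> (\<exists>L. res_length (Psi k m E) = enat L \<and>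
                 real L \<ge> real (2^k) powr (1 / 1000 * log 2 (real (2^k))))"
  have "eventually (\<lambda>k. 1 - \<delta> < gnp_half_prob k (?ext k)) sequentially"
    using extension_property_almost_surely by (rule order_tendstoD(1)) (use \<open>\<delta> > 0\<close> in simp)
  with eventually_refutation_bound_small[of c]
  have "eventually (\<lambda>k. \<forall>m. real m = c * real k \<longrightarrow> gnp_half_prob k (?hard k m) \<ge> 1 - \<delta>) sequentially"
  proof eventually_elim
    case (elim k)
    have "gnp_half_prob k (?ext k) \<le> gnp_half_prob k (?hard k m)" if "real m = c * real k" for m
      using elim(1) that by (intro gnp_half_prob_mono res_length_Psi_lower_bound) auto
    with elim(2) show ?case by force
  qed
  then show "\<exists>K. \<forall>k m. k \<ge> K \<longrightarrow> real m = c * real k \<longrightarrow> gnp_half_prob k (?hard k m) \<ge> 1 - \<delta>"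
    unfolding eventually_sequentially by blast
qed simp

end
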